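(* Let $\Phi:\mathbb{R}^n\to\mathbb{R}$ be of class $C^2$, bounded from below, with Hessian $\nabla^2\Phi$ Lipschitz continuous on bounded sets, and let $\alpha,\beta>0$. Consider the system \[ \ddot x(t)+\alpha\dot x(t)+\beta\nabla^2\Phi(x(t))\dot x(t)+\nabla\Phi(x(t))=0, \] written in phase space as $\dot x=v$, $\dot v=-\alpha v-\nabla\Phi(x)-\beta\nabla^2\Phi(x)v$. Let $(x(t),v(t))$ be a solution defined on $[0,\infty)$ that is bounded. Then $\int_0^\infty\|\dot x(t)\|^2dt<\infty$, $\int_0^\infty\|\nabla\Phi(x(t))\|^2dt<\infty$, $v(t)=\dot x(t)\to0$ and $\nabla\Phi(x(t))\to0$ as $t\to\infty$, and consequently $\operatorname{dist}\big((x(t),v(t)),S\big)\to0$, where $S:=\{(x,v)\in\mathbb{R}^n\times\mathbb{R}^n: v=0,\ \nabla\Phi(x)=0\}$. *)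

theory Defs
  imports "HOL-Analysis.Analysis"
begin

end

theory Submission
  imports Defs
begin

text \<open>
  Along a trajectory the energy \<open>E = (1 + \<alpha>\<beta>) \<Phi>(x) + \<bar>v + \<beta> \<nabla>\<Phi>(x)\<bar>\<^sup>2 / 2\<close> satisfies
  \<open>E' = - (\<alpha> \<bar>v\<bar>\<^sup>2 + \<beta> \<bar>\<nabla>\<Phi>(x)\<bar>\<^sup>2)\<close>, because the Hessian terms cancel in the derivative of
  \<open>v + \<beta> \<nabla>\<Phi>(x)\<close>. As \<open>\<Phi>\<close> is bounded below, both squared norms have finite integrals.
  If the trajectory is bounded, the derivatives of \<open>v\<close> and \<open>\<nabla>\<Phi>(x)\<close> are continuous functions
  of \<open>(x, v)\<close> and hence bounded, so these functions are Lipschitz, and Barbalat's lemma makes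
  them tend to \<open>0\<close>. Finally \<open>x\<close> stays in a compact set, on which \<open>\<nabla>\<Phi>\<close> is bounded away
  from \<open>0\<close> outside any neighbourhood of its zeros; this yields the distance statement.
\<close>

lemma lipschitz_on_norm_power2_cball:
  assumes "0 \<le> B"
  shows "(2 * B)-lipschitz_on (cball (0::'a::real_normed_vector) B) (\<lambda>y. (norm y)\<^sup>2)"
proof (rule lipschitz_onI)
  fix y z :: 'a
  assume "y \<in> cball 0 B" "z \<in> cball 0 B"
  then have "norm y + norm z \<le> 2 * B" by simp
  have "(norm y)\<^sup>2 - (norm z)\<^sup>2 = (norm y - norm z) * (norm y + norm z)"
    by (simp add: power2_eq_square algebra_simps)
  then have "dist ((norm y)\<^sup>2) ((norm z)\<^sup>2) = \<bar>norm y - norm z\<bar> * (norm y + norm z)"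
    by (simp add: dist_real_def abs_mult)
  also have "\<dots> \<le> dist y z * (2 * B)"
    using \<open>norm y + norm z \<le> 2 * B\<close> by (intro mult_mono) (auto simp: dist_norm norm_triangle_ineq3)
  finally show "dist ((norm y)\<^sup>2) ((norm z)\<^sup>2) \<le> 2 * B * dist y z"
    by (simp add: mult.commute)
qed (use assms in simp)

lemma lipschitz_on_norm_power2:
  assumes "C-lipschitz_on S f" and "bounded (f ` S)"
  shows "\<exists>L. L-lipschitz_on S (\<lambda>t. (norm (f t))\<^sup>2)"
proof -
  obtain B where "B > 0" and "f ` S \<subseteq> cball 0 B"
    using assms(2) by (force simp: bounded_pos)
  then have "(2 * B)-lipschitz_on (f ` S) (\<lambda>y. (norm y)\<^sup>2)"
    by (intro lipschitz_on_subset[OF lipschitz_on_norm_power2_cball]) auto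
  then show ?thesis
    using lipschitz_on_compose2[OF assms(1)] by blast
qed

lemma bounded_vector_derivative_imp_lipschitz:
  fixes f :: "real \<Rightarrow> 'a::real_normed_vector"
  assumes "convex S"
    and "\<And>t. t \<in> S \<Longrightarrow> (f has_vector_derivative f' t) (at t within S)"
    and "bounded (f' ` S)"
  shows "\<exists>L. L-lipschitz_on S f"
proof -
  obtain B where "B > 0" and B: "\<And>t. t \<in> S \<Longrightarrow> norm (f' t) \<le> B"
    using assms(3) by (auto simp: bounded_pos)
  have "B-lipschitz_on S f"
  proof (rule bounded_derivative_imp_lipschitz[where f' = "\<lambda>t h. h *\<^sub>R f' t"])
    show "(f has_derivative (\<lambda>h. h *\<^sub>R f' t)) (at t within S)" if "t \<in> S" for t
      using assms(2)[OF that] by (simp add: has_vector_derivative_def)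
    show "onorm (\<lambda>h. h *\<^sub>R f' t) \<le> B" if "t \<in> S" for t
      using B[OF that] by (simp add: onorm_scaleR_left[OF bounded_linear_ident] onorm_id)
  qed (use assms(1) \<open>B > 0\<close> in auto)
  then show ?thesis ..
qed

lemma nonneg_bounded_integrals_converge:
  fixes f :: "real \<Rightarrow> real"
  assumes nonneg: "\<And>t. t \<ge> a \<Longrightarrow> 0 \<le> f t"
    and int: "\<And>T. f integrable_on {a..T}"
    and bound: "\<And>T. T \<ge> a \<Longrightarrow> integral {a..T} f \<le> C"
  obtains I where "((\<lambda>T. integral {a..T} f) \<longlongrightarrow> I) at_top" and "(f has_integral I) {a..}"
proof -
  let ?F = "\<lambda>T. integral {a..T} f"
  have mono: "mono ?F"
    by (intro monoI integral_subset_le int) (auto intro: nonneg)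
  have "?F T \<le> C" for T
    using monoD[OF mono, of T "max a T"] bound[of "max a T"] by simp
  then have "bdd_above (range (\<lambda>n. ?F (real n)))"
    by (intro bdd_aboveI2)
  then have "(\<lambda>n. ?F (real n)) \<longlonglongrightarrow> (SUP n. ?F (real n))"
    by (intro LIMSEQ_incseq_SUP) (auto simp: incseq_def intro!: monoD[OF mono])
  then have lim: "(?F \<longlongrightarrow> (SUP n. ?F (real n))) at_top"
    by (rule tendsto_at_topI_sequentially_real[OF mono])
  show ?thesis
    by (rule that[OF lim has_integral_to_inf[OF int lim nonneg]])
qed

lemma lipschitz_integral_lower_bound:
  fixes f :: "real \<Rightarrow> real"
  assumes lip: "L-lipschitz_on {t..t + d} f"
    and "d > 0" and "L * d \<le> e / 2" and "e \<le> \<bar>f t\<bar>"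
  shows "d * (e / 2) \<le> \<bar>integral {t..t + d} f\<bar>"
proof -
  have int: "f integrable_on {t..t + d}"
    by (intro integrable_continuous_interval lipschitz_on_continuous_on[OF lip])
  have near: "\<bar>f s - f t\<bar> \<le> e / 2" if "s \<in> {t..t + d}" for s
  proof -
    have "\<bar>f s - f t\<bar> \<le> L * \<bar>s - t\<bar>"
      using lipschitz_onD[OF lip, of s t] that \<open>d > 0\<close> by (simp add: dist_real_def)
    also have "\<dots> \<le> L * d"
      using that lipschitz_on_nonneg[OF lip] by (intro mult_left_mono) auto
    finally show ?thesis
      using \<open>L * d \<le> e / 2\<close> by linarith
  qed
  consider "e \<le> f t" | "f t \<le> - e"
    using \<open>e \<le> \<bar>f t\<bar>\<close> by linarith
  then show ?thesis
  proof cases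
    case 1
    have "e / 2 \<le> f s" if "s \<in> {t..t + d}" for s
      using near[OF that] 1 by linarith
    then have "integral {t..t + d} (\<lambda>_. e / 2) \<le> integral {t..t + d} f"
      using int by (intro integral_le) auto
    then show ?thesis
      using \<open>d > 0\<close> by simp
  next
    case 2
    have "f s \<le> - e / 2" if "s \<in> {t..t + d}" for s
      using near[OF that] 2 by linarith
    then have "integral {t..t + d} f \<le> integral {t..t + d} (\<lambda>_. - e / 2)"
      using int by (intro integral_le) auto
    then show ?thesis
      using \<open>d > 0\<close> by simp
  qed
qed

lemma Barbalat_lemma:
  fixes f :: "real \<Rightarrow> real"
  assumes lip: "L-lipschitz_on {a..} f"
    and lim: "((\<lambda>T. integral {a..T} f) \<longlongrightarrow> I) at_top"
  shows "(f \<longlongrightarrow> 0) at_top"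
proof (rule tendstoI)
  fix e :: real
  assume "e > 0"
  define d where "d = e / (2 * (L + 1))"
  have "L \<ge> 0"
    using lipschitz_on_nonneg[OF lip] .
  then have "d > 0" and "L * d \<le> e / 2"
    using \<open>e > 0\<close> by (auto simp: d_def field_simps)
  have "filterlim (\<lambda>t. t + d) at_top at_top"
    using filterlim_tendsto_add_at_top[OF tendsto_const filterlim_ident, of d]
    by (simp add: add.commute)
  then have "((\<lambda>t. integral {a..t + d} f - integral {a..t} f) \<longlongrightarrow> I - I) at_top"
    by (intro tendsto_diff filterlim_compose[OF lim] lim)
  then have "eventually (\<lambda>t. \<bar>integral {a..t + d} f - integral {a..t} f\<bar> < d * (e / 2)) at_top"
    using tendstoD[of _ "I - I" _ "d * (e / 2)"] \<open>d > 0\<close> \<open>e > 0\<close> by (simp add: dist_real_def)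
  moreover have "eventually (\<lambda>t. t \<ge> a) at_top"
    by (rule eventually_ge_at_top)
  ultimately show "eventually (\<lambda>t. dist (f t) 0 < e) at_top"
  proof eventually_elim
    case (elim t)
    have "f integrable_on {a..t + d}"
      by (intro integrable_continuous_interval
          continuous_on_subset[OF lipschitz_on_continuous_on[OF lip]]) auto
    then have "integral {t..t + d} f = integral {a..t + d} f - integral {a..t} f"
      using Henstock_Kurzweil_Integration.integral_combine[of a t "t + d" f] elim(2) \<open>d > 0\<close>
      by simp
    then have "\<not> d * (e / 2) \<le> \<bar>integral {t..t + d} f\<bar>"
      using elim(1) by simp
    then have "\<not> e \<le> \<bar>f t\<bar>"
      using lipschitz_integral_lower_bound[OF lipschitz_on_subset[OF lip] \<open>d > 0\<close>
          \<open>L * d \<le> e / 2\<close>] elim(2) by auto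
    then show ?case
      by simp
  qed
qed

lemma lipschitz_square_integrable_imp_tendsto_zero:
  fixes f :: "real \<Rightarrow> 'a::real_normed_vector"
  assumes "C-lipschitz_on {a..} f" and "bounded (f ` {a..})"
    and "((\<lambda>T. integral {a..T} (\<lambda>t. (norm (f t))\<^sup>2)) \<longlongrightarrow> I) at_top"
  shows "(f \<longlongrightarrow> 0) at_top"
proof -
  obtain L where "L-lipschitz_on {a..} (\<lambda>t. (norm (f t))\<^sup>2)"
    using lipschitz_on_norm_power2[OF assms(1,2)] by blast
  then have "((\<lambda>t. (norm (f t))\<^sup>2) \<longlongrightarrow> 0) at_top"
    using assms(3) by (rule Barbalat_lemma)
  then show ?thesis
    by (simp add: tendsto_norm_zero_iff)
qed

lemma continuous_on_matrix_vector_mult [continuous_intros]: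
  fixes A :: "'a::topological_space \<Rightarrow> real ^ 'n ^ 'm"
  assumes "continuous_on S A" and "continuous_on S u"
  shows "continuous_on S (\<lambda>p. A p *v u p)"
  unfolding matrix_vector_mult_def by (intro continuous_intros assms)

lemma infdist_zero_set_tendsto_zero:
  fixes x :: "'b \<Rightarrow> 'a::metric_space" and v :: "'b \<Rightarrow> 'c::real_normed_vector"
    and g :: "'a \<Rightarrow> 'd::real_normed_vector"
  assumes "compact K" and "continuous_on UNIV g" and "eventually (\<lambda>t. x t \<in> K) F"
    and "(v \<longlongrightarrow> 0) F" and "((\<lambda>t. g (x t)) \<longlongrightarrow> 0) F"
  shows "((\<lambda>t. infdist (x t, v t) {(y, w). w = 0 \<and> g y = 0}) \<longlongrightarrow> 0) F"
proof (rule tendstoI)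
  fix e :: real
  assume "e > 0"
  define Z :: "('a \<times> 'c) set" where "Z = {(y, w). w = 0 \<and> g y = 0}"
  define K' where "K' = K \<inter> {y. e / 2 \<le> infdist (y, 0) Z}"
  have "compact K'"
    unfolding K'_def
    by (intro compact_Int_closed \<open>compact K\<close> closed_Collect_le continuous_intros)
  have nonzero: "g y \<noteq> 0" if "y \<in> K'" for y
    using that \<open>e > 0\<close> by (auto simp: K'_def Z_def)
  text \<open>By compactness, \<open>g\<close> is bounded away from \<open>0\<close> on \<open>K'\<close>.\<close>
  have "eventually (\<lambda>t. x t \<notin> K') F"
  proof (cases "K' = {}")
    case False
    obtain y0 where "y0 \<in> K'" and y0: "\<And>y. y \<in> K' \<Longrightarrow> norm (g y0) \<le> norm (g y)"
      using continuous_attains_inf[OF \<open>compact K'\<close> False, of "\<lambda>y. norm (g y)"]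
        continuous_on_subset[OF assms(2)] by (auto intro!: continuous_intros)
    have "eventually (\<lambda>t. norm (g (x t)) < norm (g y0)) F"
      using tendstoD[OF assms(5), of "norm (g y0)"] \<open>y0 \<in> K'\<close> nonzero
      by simp
    then show ?thesis
      by eventually_elim (use y0 in fastforce)
  qed simp
  moreover have "eventually (\<lambda>t. norm (v t) < e / 2) F"
    using tendstoD[OF assms(4), of "e / 2"] \<open>e > 0\<close> by simp
  ultimately show "eventually (\<lambda>t. dist (infdist (x t, v t) Z) 0 < e) F"
    using assms(3)
  proof eventually_elim
    case (elim t)
    then have "infdist (x t, 0) Z < e / 2"
      by (auto simp: K'_def)
    moreover have "infdist (x t, v t) Z \<le> infdist (x t, 0) Z + norm (v t)"
      using infdist_triangle[of "(x t, v t)" Z "(x t, 0)"] by (simp add: dist_Pair_Pair dist_norm)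
    ultimately show ?case
      using infdist_nonneg[of "(x t, v t)" Z] elim(2) by simp
  qed
qed

locale hessian_damped_trajectory =
  fixes \<Phi> :: "real ^ 'n \<Rightarrow> real"
    and gradPhi :: "real ^ 'n \<Rightarrow> real ^ 'n"
    and hessPhi :: "real ^ 'n \<Rightarrow> real ^ 'n ^ 'n"
    and \<alpha> \<beta> :: real
    and x v :: "real \<Rightarrow> real ^ 'n"
  assumes grad: "\<And>y. (\<Phi> has_derivative (\<lambda>h. gradPhi y \<bullet> h)) (at y)"
    and hess: "\<And>y. (gradPhi has_derivative (\<lambda>h. hessPhi y *v h)) (at y)"
    and bdd_below: "\<exists>m. \<forall>y. m \<le> \<Phi> y"
    and \<alpha>_pos: "\<alpha> > 0" and \<beta>_pos: "\<beta> > 0"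
    and x_ode: "\<And>t. t \<ge> 0 \<Longrightarrow> (x has_vector_derivative v t) (at t within {0..})"
    and v_ode: "\<And>t. t \<ge> 0 \<Longrightarrow>
        (v has_vector_derivative
           (- \<alpha> *\<^sub>R v t - gradPhi (x t) - \<beta> *\<^sub>R (hessPhi (x t) *v v t))) (at t within {0..})"
begin

definition energy :: "real \<Rightarrow> real" where
  "energy t = (1 + \<alpha> * \<beta>) * \<Phi> (x t) + (norm (v t + \<beta> *\<^sub>R gradPhi (x t)))\<^sup>2 / 2"

definition dissipation :: "real \<Rightarrow> real" where
  "dissipation t = \<alpha> * (norm (v t))\<^sup>2 + \<beta> * (norm (gradPhi (x t)))\<^sup>2"

lemma gradPhi_continuous: "continuous_on UNIV gradPhi"
  using hess by (intro has_derivative_continuous_on) (auto intro: has_derivative_at_withinI)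

lemma gradPhi_x_has_vector_derivative:
  assumes "t \<ge> 0"
  shows "((\<lambda>t. gradPhi (x t)) has_vector_derivative hessPhi (x t) *v v t) (at t within {0..})"
  using has_derivative_compose[OF x_ode[OF assms, unfolded has_vector_derivative_def] hess]
  by (simp add: has_vector_derivative_def matrix_vector_mult_scaleR)

lemma continuous_on_v: "continuous_on {0..} v"
  using v_ode by (intro continuous_on_vector_derivative) auto

lemma continuous_on_gradPhi_x: "continuous_on {0..} (\<lambda>t. gradPhi (x t))"
  using gradPhi_x_has_vector_derivative by (intro continuous_on_vector_derivative) auto

lemma energy_identity:
  fixes a b :: "'a::real_inner"
  shows "(1 + \<alpha> * \<beta>) * (b \<bullet> a) + (a + \<beta> *\<^sub>R b) \<bullet> (- \<alpha> *\<^sub>R a - b)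
    = - (\<alpha> * (norm a)\<^sup>2 + \<beta> * (norm b)\<^sup>2)"
  by (simp add: inner_add_left inner_diff_right inner_commute[of a b] power2_norm_eq_inner
      algebra_simps)

lemma energy_has_vector_derivative:
  assumes "t \<ge> 0"
  shows "(energy has_vector_derivative - dissipation t) (at t within {0..})"
proof -
  define w where "w = (\<lambda>t. v t + \<beta> *\<^sub>R gradPhi (x t))"
  text \<open>The Hessian terms cancel: \<open>w\<close> obeys \<open>w' = - \<alpha> v - \<nabla>\<Phi>(x)\<close>.\<close>
  have "(w has_vector_derivative - \<alpha> *\<^sub>R v t - gradPhi (x t)) (at t within {0..})"
    using has_vector_derivative_add[OF v_ode[OF assms]
        bounded_linear.has_vector_derivative[OF bounded_linear_scaleR_right
          gradPhi_x_has_vector_derivative[OF assms], of \<beta>]]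
    by (simp add: w_def)
  moreover have "((\<lambda>t. \<Phi> (x t)) has_vector_derivative gradPhi (x t) \<bullet> v t) (at t within {0..})"
    using has_derivative_compose[OF x_ode[OF assms, unfolded has_vector_derivative_def] grad]
    by (simp add: has_vector_derivative_def)
  ultimately have "((\<lambda>t. (1 + \<alpha> * \<beta>) * \<Phi> (x t) + (w t \<bullet> w t) / 2) has_vector_derivative
      (1 + \<alpha> * \<beta>) * (gradPhi (x t) \<bullet> v t) +
      (w t \<bullet> (- \<alpha> *\<^sub>R v t - gradPhi (x t)) + (- \<alpha> *\<^sub>R v t - gradPhi (x t)) \<bullet> w t) / 2)
      (at t within {0..})"
    by (intro has_vector_derivative_add has_vector_derivative_mult_right has_vector_derivative_divide
        bounded_bilinear.has_vector_derivative[OF bounded_bilinear_inner])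
  moreover have "energy = (\<lambda>t. (1 + \<alpha> * \<beta>) * \<Phi> (x t) + (w t \<bullet> w t) / 2)"
    by (simp add: fun_eq_iff energy_def w_def power2_norm_eq_inner)
  moreover have "(1 + \<alpha> * \<beta>) * (gradPhi (x t) \<bullet> v t) +
      (w t \<bullet> (- \<alpha> *\<^sub>R v t - gradPhi (x t)) + (- \<alpha> *\<^sub>R v t - gradPhi (x t)) \<bullet> w t) / 2
      = - dissipation t"
    using energy_identity[where a = "v t" and b = "gradPhi (x t)"]
      inner_commute[of "- \<alpha> *\<^sub>R v t - gradPhi (x t)" "w t"]
    by (simp add: w_def dissipation_def)
  ultimately show ?thesis
    by simp
qed

lemma dissipation_has_integral:
  assumes "T \<ge> 0"
  shows "(dissipation has_integral energy 0 - energy T) {0..T}"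
proof -
  have "((\<lambda>t. - dissipation t) has_integral energy T - energy 0) {0..T}"
    using assms
    by (intro fundamental_theorem_of_calculus)
      (auto intro!: has_vector_derivative_within_subset[OF energy_has_vector_derivative])
  from has_integral_neg[OF this] show ?thesis
    by simp
qed

lemma integral_dissipation_bounded:
  obtains C where "\<And>T. T \<ge> 0 \<Longrightarrow> integral {0..T} dissipation \<le> C"
proof -
  obtain m where m: "\<And>y. m \<le> \<Phi> y"
    using bdd_below by blast
  have "(1 + \<alpha> * \<beta>) * m \<le> energy T" for T
  proof -
    have "(1 + \<alpha> * \<beta>) * m \<le> (1 + \<alpha> * \<beta>) * \<Phi> (x T)"
      using m \<alpha>_pos \<beta>_pos by (intro mult_left_mono) auto
    then show ?thesis
      by (simp add: energy_def add_increasing2)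
  qed
  then show ?thesis
    using that[of "energy 0 - (1 + \<alpha> * \<beta>) * m"] integral_unique[OF dissipation_has_integral]
    by (metis diff_left_mono)
qed

lemma integral_convergent_if_dominated_by_dissipation:
  assumes "continuous_on {0..} f" and "\<And>t. 0 \<le> f t"
    and "c > 0" and "\<And>t. t \<ge> 0 \<Longrightarrow> c * f t \<le> dissipation t"
  obtains I where "((\<lambda>T. integral {0..T} f) \<longlongrightarrow> I) at_top" and "(f has_integral I) {0..}"
proof -
  obtain C where C: "\<And>T. T \<ge> 0 \<Longrightarrow> integral {0..T} dissipation \<le> C"
    using integral_dissipation_bounded by blast
  have int: "f integrable_on {0..T}" for T
    by (intro integrable_continuous_interval continuous_on_subset[OF assms(1)]) auto
  have "integral {0..T} f \<le> C / c" if "T \<ge> 0" for T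
  proof -
    have "c * integral {0..T} f = integral {0..T} (\<lambda>t. c * f t)"
      by simp
    also have "\<dots> \<le> integral {0..T} dissipation"
      using int assms(3,4) dissipation_has_integral[OF that] by (intro integral_le) auto
    also have "\<dots> \<le> C"
      using C[OF that] .
    finally show ?thesis
      using \<open>c > 0\<close> by (simp add: field_simps)
  qed
  then show ?thesis
    using nonneg_bounded_integrals_converge[OF assms(2) int] that by blast
qed

lemma norm_v_power2_integral_convergent:
  obtains I where "((\<lambda>T. integral {0..T} (\<lambda>t. (norm (v t))\<^sup>2)) \<longlongrightarrow> I) at_top"
    and "((\<lambda>t. (norm (v t))\<^sup>2) has_integral I) {0..}"
proof -
  have cont: "continuous_on {0..} (\<lambda>t. (norm (v t))\<^sup>2)"
    by (intro continuous_intros continuous_on_v)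
  have bound: "\<alpha> * (norm (v t))\<^sup>2 \<le> dissipation t" for t
    using \<beta>_pos by (simp add: dissipation_def)
  show ?thesis
    by (rule integral_convergent_if_dominated_by_dissipation[OF cont zero_le_power2 \<alpha>_pos bound that])
qed

lemma norm_gradPhi_x_power2_integral_convergent:
  obtains I where "((\<lambda>T. integral {0..T} (\<lambda>t. (norm (gradPhi (x t)))\<^sup>2)) \<longlongrightarrow> I) at_top"
    and "((\<lambda>t. (norm (gradPhi (x t)))\<^sup>2) has_integral I) {0..}"
proof -
  have cont: "continuous_on {0..} (\<lambda>t. (norm (gradPhi (x t)))\<^sup>2)"
    by (intro continuous_intros continuous_on_gradPhi_x)
  have bound: "\<beta> * (norm (gradPhi (x t)))\<^sup>2 \<le> dissipation t" for t
    using \<alpha>_pos by (simp add: dissipation_def)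
  show ?thesis
    by (rule integral_convergent_if_dominated_by_dissipation[OF cont zero_le_power2 \<beta>_pos bound that])
qed

end

locale bounded_hessian_damped_trajectory = hessian_damped_trajectory +
  assumes hess_cont: "continuous_on UNIV hessPhi"
    and bdd: "bounded ((\<lambda>t. (x t, v t)) ` {0..})"
begin

lemma bounded_along_trajectory:
  assumes "continuous_on UNIV F"
  shows "bounded ((\<lambda>t. F (x t, v t)) ` {0..})"
proof -
  let ?P = "(\<lambda>t. (x t, v t)) ` {0..}"
  have "compact (closure ?P)"
    using bdd compact_closure by blast
  then have "compact (F ` closure ?P)"
    using compact_continuous_image continuous_on_subset[OF assms] by blast
  then have "bounded (F ` ?P)"
    using bounded_closure_image compact_imp_bounded by blast
  then show ?thesis
    by (simp add: image_image)
qed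

lemma bounded_x: "bounded (x ` {0..})"
  using bounded_along_trajectory[of fst] by (simp add: continuous_on_fst)

lemma bounded_v: "bounded (v ` {0..})"
  using bounded_along_trajectory[of snd] by (simp add: continuous_on_snd)

lemma bounded_gradPhi_x: "bounded ((\<lambda>t. gradPhi (x t)) ` {0..})"
  using bounded_along_trajectory[OF continuous_on_compose2[OF gradPhi_continuous
        continuous_on_fst[OF continuous_on_id]]]
  by simp

lemma lipschitz_v: "\<exists>L. L-lipschitz_on {0..} v"
proof (rule bounded_vector_derivative_imp_lipschitz[OF convex_real_interval(1) v_ode])
  have "continuous_on UNIV (\<lambda>p. - \<alpha> *\<^sub>R snd p - gradPhi (fst p) - \<beta> *\<^sub>R (hessPhi (fst p) *v snd p))"
    by (intro continuous_intros continuous_on_compose2[OF gradPhi_continuous]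
        continuous_on_compose2[OF hess_cont]) auto
  from bounded_along_trajectory[OF this] show
    "bounded ((\<lambda>t. - \<alpha> *\<^sub>R v t - gradPhi (x t) - \<beta> *\<^sub>R (hessPhi (x t) *v v t)) ` {0..})"
    by simp
qed auto

lemma lipschitz_gradPhi_x: "\<exists>L. L-lipschitz_on {0..} (\<lambda>t. gradPhi (x t))"
proof (rule bounded_vector_derivative_imp_lipschitz[OF convex_real_interval(1)
      gradPhi_x_has_vector_derivative])
  have "continuous_on UNIV (\<lambda>p. hessPhi (fst p) *v snd p)"
    by (intro continuous_intros continuous_on_compose2[OF hess_cont]) auto
  from bounded_along_trajectory[OF this] show "bounded ((\<lambda>t. hessPhi (x t) *v v t) ` {0..})"
    by simp
qed auto

lemma v_tendsto_zero: "(v \<longlongrightarrow> 0) at_top"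
proof -
  obtain L where "L-lipschitz_on {0..} v"
    using lipschitz_v by blast
  moreover obtain I where "((\<lambda>T. integral {0..T} (\<lambda>t. (norm (v t))\<^sup>2)) \<longlongrightarrow> I) at_top"
    using norm_v_power2_integral_convergent by blast
  ultimately show ?thesis
    using lipschitz_square_integrable_imp_tendsto_zero bounded_v by blast
qed

lemma gradPhi_x_tendsto_zero: "((\<lambda>t. gradPhi (x t)) \<longlongrightarrow> 0) at_top"
proof -
  obtain L where "L-lipschitz_on {0..} (\<lambda>t. gradPhi (x t))"
    using lipschitz_gradPhi_x by blast
  moreover obtain I
    where "((\<lambda>T. integral {0..T} (\<lambda>t. (norm (gradPhi (x t)))\<^sup>2)) \<longlongrightarrow> I) at_top"
    using norm_gradPhi_x_power2_integral_convergent by blast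
  ultimately show ?thesis
    using lipschitz_square_integrable_imp_tendsto_zero bounded_gradPhi_x by blast
qed

lemma infdist_equilibria_tendsto_zero:
  "((\<lambda>t. infdist (x t, v t) {(y, w). w = 0 \<and> gradPhi y = 0}) \<longlongrightarrow> 0) at_top"
proof (rule infdist_zero_set_tendsto_zero)
  show "compact (closure (x ` {0..}))"
    using bounded_x by simp
  show "eventually (\<lambda>t. x t \<in> closure (x ` {0..})) at_top"
    using eventually_ge_at_top[of 0] by eventually_elim (simp add: closure_subset[THEN subsetD])
qed (fact gradPhi_continuous v_tendsto_zero gradPhi_x_tendsto_zero)+

end

theorem mainTheorem10:
  fixes \<Phi> :: "real ^ 'n \<Rightarrow> real"
    and gradPhi :: "real ^ 'n \<Rightarrow> real ^ 'n"
    and hessPhi :: "real ^ 'n \<Rightarrow> real ^ 'n ^ 'n"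
    and \<alpha> \<beta> :: real
    and x v :: "real \<Rightarrow> real ^ 'n"
  assumes grad: "\<And>y. (\<Phi> has_derivative (\<lambda>h. gradPhi y \<bullet> h)) (at y)"
    and hess: "\<And>y. (gradPhi has_derivative (\<lambda>h. hessPhi y *v h)) (at y)"
    and hess_cont: "continuous_on UNIV hessPhi"
    and bdd_below: "\<exists>m. \<forall>y. m \<le> \<Phi> y"
    and hess_lip: "\<And>B. bounded B \<Longrightarrow> \<exists>L. lipschitz_on L B hessPhi"
    and \<alpha>_pos: "\<alpha> > 0" and \<beta>_pos: "\<beta> > 0"
    and x_ode: "\<And>t. t \<ge> 0 \<Longrightarrow> (x has_vector_derivative v t) (at t within {0..})"
    and v_ode: "\<And>t. t \<ge> 0 \<Longrightarrow>
        (v has_vector_derivative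
           (- \<alpha> *\<^sub>R v t - gradPhi (x t) - \<beta> *\<^sub>R (hessPhi (x t) *v v t))) (at t within {0..})"
    and bdd: "bounded ((\<lambda>t. (x t, v t)) ` {0..})"
  shows "(\<lambda>t. (norm (v t))\<^sup>2) integrable_on {0..} \<and>
         (\<lambda>t. (norm (gradPhi (x t)))\<^sup>2) integrable_on {0..} \<and>
         (v \<longlongrightarrow> 0) at_top \<and>
         ((\<lambda>t. gradPhi (x t)) \<longlongrightarrow> 0) at_top \<and>
         ((\<lambda>t. infdist (x t, v t) {(y, w). w = 0 \<and> gradPhi y = 0}) \<longlongrightarrow> 0) at_top"
proof -
  text \<open>The Lipschitz continuity of the Hessian (\<open>hess_lip\<close>) only matters for the existence
    and uniqueness of trajectories.\<close>
  interpret bounded_hessian_damped_trajectory \<Phi> gradPhi hessPhi \<alpha> \<beta> x v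
    using grad hess bdd_below \<alpha>_pos \<beta>_pos x_ode v_ode hess_cont bdd
    unfolding bounded_hessian_damped_trajectory_def bounded_hessian_damped_trajectory_axioms_def
      hessian_damped_trajectory_def
    by blast
  obtain I where "((\<lambda>t. (norm (v t))\<^sup>2) has_integral I) {0..}"
    using norm_v_power2_integral_convergent .
  moreover obtain J where "((\<lambda>t. (norm (gradPhi (x t)))\<^sup>2) has_integral J) {0..}"
    using norm_gradPhi_x_power2_integral_convergent .
  ultimately show ?thesis
    using v_tendsto_zero gradPhi_x_tendsto_zero infdist_equilibria_tendsto_zero by blast
qed

end
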